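(* Let $G$ be a finite solvable group, $N$ an abelian normal subgroup of $G$, $a\in G$, $C=\mathbf{C}_G(a)$, and $C_N=\{g\in G\mid [a,g]\in N\}$ (a subgroup of $G$ containing $C$). Then $$\operatorname{dl}\big(C_N/\operatorname{core}_{C_N}(C)\big)\le \operatorname{dl}\big(C_N/(C_N\cap\mathbf{C}_G(N))\big)+1.$$ If in addition $N$ is cyclic, then $\operatorname{dl}\big(C_N/\operatorname{core}_{C_N}(C)\big)\le 2$.
   Context: $[x,g]=x^{-1}g^{-1}xg$. $\mathbf{C}_G(a)$ is the centralizer of $a$ and $\mathbf{C}_G(N)$ the centralizer of the subgroup $N$. For a subgroup $K$ of a group $L$, $\operatorname{core}_L(K)=\bigcap_{l\in L}l^{-1}Kl$. $\operatorname{dl}$ denotes derived length. *)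

theory Defs
  imports "HOL-Algebra.Algebra"
begin

text \<open>Commutator convention of the paper: [x,g] = x^-1 g^-1 x g.\<close>
definition commutator :: "('a, 'b) monoid_scheme \<Rightarrow> 'a \<Rightarrow> 'a \<Rightarrow> 'a" where
  "commutator G x g = inv\<^bsub>G\<^esub> x \<otimes>\<^bsub>G\<^esub> inv\<^bsub>G\<^esub> g \<otimes>\<^bsub>G\<^esub> x \<otimes>\<^bsub>G\<^esub> g"

definition centralizer :: "('a, 'b) monoid_scheme \<Rightarrow> 'a set \<Rightarrow> 'a set" where
  "centralizer G S = {g \<in> carrier G. \<forall>s \<in> S. g \<otimes>\<^bsub>G\<^esub> s = s \<otimes>\<^bsub>G\<^esub> g}"

definition core :: "('a, 'b) monoid_scheme \<Rightarrow> 'a set \<Rightarrow> 'a set" where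
  "core L K = (\<Inter>l \<in> carrier L. {inv\<^bsub>L\<^esub> l \<otimes>\<^bsub>L\<^esub> k \<otimes>\<^bsub>L\<^esub> l | k. k \<in> K})"

definition derived_length :: "('a, 'b) monoid_scheme \<Rightarrow> nat" where
  "derived_length H = (LEAST n. (derived H ^^ n) (carrier H) = {\<one>\<^bsub>H\<^esub>})"

end

theory Submission
  imports Defs
begin

text \<open>
  For m1, m2 in M = C_N \<inter> C_G(N) the commutators [a,mi] lie in the abelian group N and
  are fixed under conjugation by m1, m2, so [a,m1m2] = [a,m2][a,m1] = [a,m2m1].
  Hence a is conjugated in the same way by m1m2 and m2m1, i.e. the commutator of m1
  and m2 centralizes a. So M' \<subseteq> C, and as M' is normal in C_N, M' lies in the core of C
  in C_N. If the d-th derived subgroup of C_N lies in M, the (d+1)-st lies in M' and hence in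
  the core. When N is cyclic, conjugation acts on N by power maps, which commute; hence
  C_N' \<subseteq> C_G(N), i.e. C_N/M is abelian.
\<close>

text \<open>The group C_N of the paper: the preimage of the centralizer of aN in G/N.\<close>
definition centralizer_mod :: "('a, 'b) monoid_scheme \<Rightarrow> 'a set \<Rightarrow> 'a \<Rightarrow> 'a set" where
  "centralizer_mod G N a = {g \<in> carrier G. commutator G a g \<in> N}"

context group
begin

lemma mult_inv_cancel_left [simp]: "x \<in> carrier G \<Longrightarrow> y \<in> carrier G \<Longrightarrow> x \<otimes> (inv x \<otimes> y) = y"
  by (simp flip: m_assoc)

lemma inv_mult_cancel_left [simp]: "x \<in> carrier G \<Longrightarrow> y \<in> carrier G \<Longrightarrow> inv x \<otimes> (x \<otimes> y) = y"
  by (simp flip: m_assoc)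

lemma commutator_mult:
  assumes "a \<in> carrier G" "g \<in> carrier G" "h \<in> carrier G"
  shows "commutator G a (g \<otimes> h) = commutator G a h \<otimes> (inv h \<otimes> commutator G a g \<otimes> h)"
  using assms by (simp add: commutator_def m_assoc inv_mult_group)

lemma commutator_inv:
  assumes "a \<in> carrier G" "g \<in> carrier G"
  shows "commutator G a (inv g) = g \<otimes> inv (commutator G a g) \<otimes> inv g"
  using assms by (simp add: commutator_def m_assoc inv_mult_group)

lemma conj_eq_mult_commutator:
  assumes "a \<in> carrier G" "g \<in> carrier G"
  shows "inv g \<otimes> a \<otimes> g = a \<otimes> commutator G a g"
  using assms by (simp add: commutator_def m_assoc)

lemma mem_centralizer_iff_conj:
  assumes "S \<subseteq> carrier G"
  shows "g \<in> centralizer G S \<longleftrightarrow> g \<in> carrier G \<and> (\<forall>s \<in> S. g \<otimes> s \<otimes> inv g = s)"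
proof -
  have "g \<otimes> s = s \<otimes> g \<longleftrightarrow> g \<otimes> s \<otimes> inv g = s" if "g \<in> carrier G" "s \<in> S" for s
    using that assms by (metis inv_solve_right' m_closed subsetD)
  then show ?thesis
    by (auto simp: centralizer_def)
qed

lemma subgroup_centralizer:
  assumes "S \<subseteq> carrier G"
  shows "subgroup (centralizer G S) G"
proof (rule subgroupI)
  show "centralizer G S \<noteq> {}"
    using assms by (force simp: mem_centralizer_iff_conj)
  fix g h
  assume g: "g \<in> centralizer G S" and h: "h \<in> centralizer G S"
  then have gh: "g \<in> carrier G" "h \<in> carrier G"
    using assms by (auto simp: mem_centralizer_iff_conj)
  have "inv g \<otimes> s \<otimes> inv (inv g) = s" if s: "s \<in> S" for s
  proof -
    have "g \<otimes> s \<otimes> inv g = s"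
      using g s assms by (simp add: mem_centralizer_iff_conj)
    then have "inv g \<otimes> (g \<otimes> s \<otimes> inv g) \<otimes> g = inv g \<otimes> s \<otimes> g"
      by simp
    then show ?thesis
      using gh s assms by (auto simp: m_assoc)
  qed
  then show "inv g \<in> centralizer G S"
    using gh assms by (simp add: mem_centralizer_iff_conj)
  have "g \<otimes> h \<otimes> s \<otimes> inv (g \<otimes> h) = s" if s: "s \<in> S" for s
  proof -
    have "g \<otimes> h \<otimes> s \<otimes> inv (g \<otimes> h) = g \<otimes> (h \<otimes> s \<otimes> inv h) \<otimes> inv g"
      using gh s assms by (auto simp: m_assoc inv_mult_group)
    then show ?thesis
      using g h s by (simp add: mem_centralizer_iff_conj assms)
  qed
  then show "g \<otimes> h \<in> centralizer G S"
    using gh assms by (simp add: mem_centralizer_iff_conj)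
qed (auto simp: centralizer_def)

lemma normal_centralizer:
  assumes "N \<lhd> G"
  shows "centralizer G N \<lhd> G"
proof -
  interpret N: normal N G by fact
  have "x \<otimes> c \<otimes> inv x \<in> centralizer G N"
    if x: "x \<in> carrier G" and c: "c \<in> centralizer G N" for x c
  proof -
    have c_carrier: "c \<in> carrier G"
      using c N.subset by (simp add: mem_centralizer_iff_conj)
    have "x \<otimes> c \<otimes> inv x \<otimes> n \<otimes> inv (x \<otimes> c \<otimes> inv x) = n" if n: "n \<in> N" for n
    proof -
      have "c \<otimes> (inv x \<otimes> n \<otimes> x) \<otimes> inv c = inv x \<otimes> n \<otimes> x"
        using c x n N.subset N.inv_op_closed1 by (simp add: mem_centralizer_iff_conj)
      then have "x \<otimes> (c \<otimes> (inv x \<otimes> n \<otimes> x) \<otimes> inv c) \<otimes> inv x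
          = x \<otimes> (inv x \<otimes> n \<otimes> x) \<otimes> inv x"
        by simp
      then show ?thesis
        using x n c_carrier N.subset by (auto simp: m_assoc inv_mult_group)
    qed
    then show ?thesis
      using x c_carrier N.subset by (simp add: mem_centralizer_iff_conj)
  qed
  then show ?thesis
    using subgroup_centralizer[OF N.subset] by (simp add: normal_inv_iff)
qed

lemma mem_core_iff:
  assumes "K \<subseteq> carrier G"
  shows "x \<in> core G K \<longleftrightarrow> x \<in> carrier G \<and> (\<forall>l \<in> carrier G. l \<otimes> x \<otimes> inv l \<in> K)"
proof
  assume "x \<in> core G K"
  then have x: "\<exists>k \<in> K. x = inv l \<otimes> k \<otimes> l" if "l \<in> carrier G" for l
    using that by (auto simp: core_def)
  then obtain k where "k \<in> K" "x = inv \<one> \<otimes> k \<otimes> \<one>"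
    by blast
  then have "x \<in> carrier G"
    using assms by auto
  moreover have "l \<otimes> x \<otimes> inv l \<in> K" if "l \<in> carrier G" for l
    using x[OF that] that assms by (auto simp: m_assoc)
  ultimately show "x \<in> carrier G \<and> (\<forall>l \<in> carrier G. l \<otimes> x \<otimes> inv l \<in> K)"
    by blast
next
  assume x: "x \<in> carrier G \<and> (\<forall>l \<in> carrier G. l \<otimes> x \<otimes> inv l \<in> K)"
  have "x = inv l \<otimes> (l \<otimes> x \<otimes> inv l) \<otimes> l" if "l \<in> carrier G" for l
    using x that by (simp add: m_assoc)
  then show "x \<in> core G K"
    using x by (auto simp: core_def)
qed

lemma normal_core:
  assumes K: "subgroup K G"
  shows "core G K \<lhd> G"
proof -
  note K_carrier = subgroup.subset[OF K]
  have "subgroup (core G K) G"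
  proof (rule subgroupI)
    show "core G K \<subseteq> carrier G"
      using K_carrier by (auto simp: mem_core_iff)
    have "\<one> \<in> core G K"
      using K_carrier subgroup.one_closed[OF K] by (simp add: mem_core_iff)
    then show "core G K \<noteq> {}"
      by blast
    fix x y
    assume x: "x \<in> core G K" and y: "y \<in> core G K"
    have "l \<otimes> inv x \<otimes> inv l = inv (l \<otimes> x \<otimes> inv l)" if "l \<in> carrier G" for l
      using that x K_carrier by (simp add: mem_core_iff m_assoc inv_mult_group)
    then show "inv x \<in> core G K"
      using x K_carrier by (simp add: mem_core_iff subgroup.m_inv_closed[OF K])
    have "l \<otimes> (x \<otimes> y) \<otimes> inv l = (l \<otimes> x \<otimes> inv l) \<otimes> (l \<otimes> y \<otimes> inv l)" if "l \<in> carrier G" for l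
      using that x y K_carrier by (simp add: mem_core_iff m_assoc)
    then show "x \<otimes> y \<in> core G K"
      using x y K_carrier by (simp add: mem_core_iff subgroup.m_closed[OF K])
  qed
  moreover have "y \<otimes> x \<otimes> inv y \<in> core G K" if y: "y \<in> carrier G" and x: "x \<in> core G K" for x y
  proof -
    have "l \<otimes> (y \<otimes> x \<otimes> inv y) \<otimes> inv l = (l \<otimes> y) \<otimes> x \<otimes> inv (l \<otimes> y)" if "l \<in> carrier G" for l
      using that x y K_carrier by (simp add: mem_core_iff m_assoc inv_mult_group)
    then show ?thesis
      using x y K_carrier by (simp add: mem_core_iff)
  qed
  ultimately show ?thesis
    by (simp add: normal_inv_iff)
qed

lemma normal_subset_core:
  assumes S: "S \<lhd> G" and "S \<subseteq> K"
  shows "S \<subseteq> core G K"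
proof
  fix s
  assume s: "s \<in> S"
  have "s = inv l \<otimes> (l \<otimes> s \<otimes> inv l) \<otimes> l \<and> l \<otimes> s \<otimes> inv l \<in> K" if "l \<in> carrier G" for l
    using that s assms normal.inv_op_closed2[OF S] normal_imp_subgroup[OF S]
    by (auto simp: m_assoc dest: subgroup.mem_carrier)
  then show "s \<in> core G K"
    by (auto simp: core_def)
qed

lemma mult_inv_mem_centralizer_if_commutator_eq:
  assumes "a \<in> carrier G" "u \<in> carrier G" "v \<in> carrier G"
    and "commutator G a u = commutator G a v"
  shows "u \<otimes> inv v \<in> centralizer G {a}"
proof -
  have "inv u \<otimes> a \<otimes> u = inv v \<otimes> a \<otimes> v"
    using assms by (simp add: conj_eq_mult_commutator)
  then have "u \<otimes> (inv u \<otimes> a \<otimes> u) \<otimes> inv v = u \<otimes> (inv v \<otimes> a \<otimes> v) \<otimes> inv v"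
    by simp
  then have "a \<otimes> (u \<otimes> inv v) = u \<otimes> inv v \<otimes> a"
    using assms by (simp add: m_assoc)
  then show ?thesis
    using assms by (simp add: centralizer_def)
qed

lemma subgroup_centralizer_mod:
  assumes "N \<lhd> G" "a \<in> carrier G"
  shows "subgroup (centralizer_mod G N a) G"
proof (rule subgroupI)
  interpret N: normal N G by fact
  have "commutator G a \<one> = \<one>"
    using assms by (simp add: commutator_def)
  then show "centralizer_mod G N a \<noteq> {}"
    by (force simp: centralizer_mod_def)
  fix g h
  assume g: "g \<in> centralizer_mod G N a" and h: "h \<in> centralizer_mod G N a"
  then show "inv g \<in> centralizer_mod G N a" "g \<otimes> h \<in> centralizer_mod G N a"
    using assms by (auto simp: centralizer_mod_def commutator_inv commutator_mult
        N.inv_op_closed1 N.inv_op_closed2)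
qed (auto simp: centralizer_mod_def)

lemma centralizer_subset_centralizer_mod:
  assumes "subgroup N G" "a \<in> carrier G"
  shows "centralizer G {a} \<subseteq> centralizer_mod G N a"
proof
  fix g
  assume "g \<in> centralizer G {a}"
  then have g: "g \<in> carrier G" "g \<otimes> a = a \<otimes> g"
    by (auto simp: centralizer_def)
  then have "commutator G a g = \<one>"
    using assms by (simp add: commutator_def m_assoc flip: g(2))
  then show "g \<in> centralizer_mod G N a"
    using g assms by (simp add: centralizer_mod_def subgroup.one_closed)
qed

lemma derived_centralizer_mod_Int_centralizer_subset:
  assumes N: "N \<lhd> G" and N_abelian: "comm_group (G\<lparr>carrier := N\<rparr>)" and a: "a \<in> carrier G"
  shows "derived G (centralizer_mod G N a \<inter> centralizer G N) \<subseteq> centralizer G {a}"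
  unfolding derived_def
proof (rule generate_subgroup_incl)
  interpret N: normal N G by fact
  show "subgroup (centralizer G {a}) G"
    using a by (simp add: subgroup_centralizer)
  show "derived_set G (centralizer_mod G N a \<inter> centralizer G N) \<subseteq> centralizer G {a}"
  proof clarify
    fix m1 m2
    assume m1: "m1 \<in> centralizer_mod G N a" "m1 \<in> centralizer G N"
      and m2: "m2 \<in> centralizer_mod G N a" "m2 \<in> centralizer G N"
    have m_carrier: "m1 \<in> carrier G" "m2 \<in> carrier G"
      using m1 m2 by (simp_all add: centralizer_mod_def)
    have comm_in_N: "commutator G a m1 \<in> N" "commutator G a m2 \<in> N"
      using m1 m2 by (simp_all add: centralizer_mod_def)
    have conj_inv_fixes: "inv m \<otimes> n \<otimes> m = n" if "m \<in> centralizer G N" "n \<in> N" for m n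
      using subgroup.m_inv_closed[OF subgroup_centralizer[OF N.subset] that(1)] that N.subset
      by (simp add: mem_centralizer_iff_conj)
    have "commutator G a (m1 \<otimes> m2) = commutator G a m2 \<otimes> commutator G a m1"
      using a m_carrier by (simp add: commutator_mult conj_inv_fixes m2(2) comm_in_N(1))
    also have "\<dots> = commutator G a m1 \<otimes> commutator G a m2"
      using comm_groupE(4)[OF N_abelian] comm_in_N by simp
    also have "\<dots> = commutator G a (m2 \<otimes> m1)"
      using a m_carrier by (simp add: commutator_mult conj_inv_fixes m1(2) comm_in_N(2))
    finally have "m1 \<otimes> m2 \<otimes> inv (m2 \<otimes> m1) \<in> centralizer G {a}"
      using a m_carrier by (simp add: mult_inv_mem_centralizer_if_commutator_eq)
    then show "m1 \<otimes> m2 \<otimes> inv m1 \<otimes> inv m2 \<in> centralizer G {a}"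
      using m_carrier by (simp add: inv_mult_group m_assoc)
  qed
qed

lemma conj_int_pow:
  assumes "g \<in> carrier G" "x \<in> carrier G"
  shows "g \<otimes> x [^] (i::int) \<otimes> inv g = (g \<otimes> x \<otimes> inv g) [^] i"
proof -
  have "(\<lambda>y. g \<otimes> y \<otimes> inv g) \<in> hom G G"
    using assms by (auto simp: hom_def m_assoc)
  then show ?thesis
    using hom_int_pow[of _ G G x i] assms is_group by simp
qed

lemma conj_cyclic_normal_eq_int_pow:
  assumes N: "N \<lhd> G" and N_cyclic: "cyclic_group (G\<lparr>carrier := N\<rparr>)" and g: "g \<in> carrier G"
  obtains k :: int where "\<And>n. n \<in> N \<Longrightarrow> g \<otimes> n \<otimes> inv g = n [^] k"
proof -
  interpret N: normal N G by fact
  obtain x where x: "x \<in> N" and N_eq: "N = range (\<lambda>i::int. x [^] i)"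
    using N_cyclic N.subgroup_axioms
    by (auto simp: group.cyclic_group[OF subgroup_imp_group] simp flip: int_pow_consistent)
  have "g \<otimes> x \<otimes> inv g \<in> range (\<lambda>i::int. x [^] i)"
    using N.inv_op_closed2[OF g x] N_eq by simp
  then obtain k :: int where k: "g \<otimes> x \<otimes> inv g = x [^] k"
    by blast
  have "g \<otimes> n \<otimes> inv g = n [^] k" if "n \<in> N" for n
  proof -
    have "n \<in> range (\<lambda>i::int. x [^] i)"
      using \<open>n \<in> N\<close> N_eq by simp
    then obtain i :: int where n: "n = x [^] i"
      by blast
    have "g \<otimes> n \<otimes> inv g = (g \<otimes> x \<otimes> inv g) [^] i"
      using g x N.subset by (auto simp: n conj_int_pow)
    also have "\<dots> = n [^] k"
      using x N.subset by (auto simp: k n int_pow_pow mult.commute)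
    finally show ?thesis .
  qed
  then show ?thesis
    by (rule that)
qed

lemma conj_commute_cyclic_normal:
  assumes N: "N \<lhd> G" and N_cyclic: "cyclic_group (G\<lparr>carrier := N\<rparr>)"
    and g: "g \<in> carrier G" and h: "h \<in> carrier G" and n: "n \<in> N"
  shows "g \<otimes> (h \<otimes> n \<otimes> inv h) \<otimes> inv g = h \<otimes> (g \<otimes> n \<otimes> inv g) \<otimes> inv h"
proof -
  interpret N: normal N G by fact
  obtain k :: int where k: "\<And>n. n \<in> N \<Longrightarrow> g \<otimes> n \<otimes> inv g = n [^] k"
    using conj_cyclic_normal_eq_int_pow[OF N N_cyclic g] by blast
  obtain j :: int where j: "\<And>n. n \<in> N \<Longrightarrow> h \<otimes> n \<otimes> inv h = n [^] j"
    using conj_cyclic_normal_eq_int_pow[OF N N_cyclic h] by blast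
  have n_pow: "n [^] i \<in> N" for i :: int
    using int_pow_consistent[OF N.subgroup_axioms n]
      group.int_pow_closed[OF subgroup_imp_group[OF N.subgroup_axioms]] n by simp
  show ?thesis
    using n N.subset by (simp add: j k n_pow int_pow_pow mult.commute)
qed

lemma derived_subset_centralizer_cyclic_normal:
  assumes N: "N \<lhd> G" and N_cyclic: "cyclic_group (G\<lparr>carrier := N\<rparr>)"
  shows "derived G (carrier G) \<subseteq> centralizer G N"
  unfolding derived_def
proof (rule generate_subgroup_incl)
  interpret N: normal N G by fact
  show "subgroup (centralizer G N) G"
    using N.subset by (rule subgroup_centralizer)
  show "derived_set G (carrier G) \<subseteq> centralizer G N"
  proof clarify
    fix g h
    assume gh: "g \<in> carrier G" "h \<in> carrier G"
    have "g \<otimes> h \<otimes> inv g \<otimes> inv h \<otimes> n \<otimes> inv (g \<otimes> h \<otimes> inv g \<otimes> inv h) = n" if n: "n \<in> N" for n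
    proof -
      \<comment> \<open>for this n' the two sides below are c \<otimes> n \<otimes> inv c and n, with c the commutator of g, h\<close>
      define n' where "n' = inv (h \<otimes> g) \<otimes> n \<otimes> (h \<otimes> g)"
      have "n' \<in> N"
        using N.inv_op_closed1 n gh by (simp add: n'_def)
      then have "g \<otimes> (h \<otimes> n' \<otimes> inv h) \<otimes> inv g = h \<otimes> (g \<otimes> n' \<otimes> inv g) \<otimes> inv h"
        by (rule conj_commute_cyclic_normal[OF N N_cyclic gh])
      then show ?thesis
        using gh n N.subset by (simp add: n'_def m_assoc inv_mult_group)
    qed
    then show "g \<otimes> h \<otimes> inv g \<otimes> inv h \<in> centralizer G N"
      using gh N.subset by (simp add: mem_centralizer_iff_conj)
  qed
qed

lemma derived_subgroup_subset_centralizer_cyclic_normal: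
  assumes "N \<lhd> G" "cyclic_group (G\<lparr>carrier := N\<rparr>)" and H: "subgroup H G"
  shows "derived (G\<lparr>carrier := H\<rparr>) H \<subseteq> H \<inter> centralizer G N"
proof -
  have "derived G H \<subseteq> derived G (carrier G)"
    using mono_derived[OF subgroup.subset[OF H]] .
  also have "\<dots> \<subseteq> centralizer G N"
    using assms(1,2) by (rule derived_subset_centralizer_cyclic_normal)
  finally show ?thesis
    using derived_incl[OF subset_refl H] derived_consistent[OF subset_refl H] by simp
qed

lemma derived_centralizer_mod_Int_centralizer_subset_core:
  assumes N: "N \<lhd> G" and "comm_group (G\<lparr>carrier := N\<rparr>)" and a: "a \<in> carrier G"
  defines "H \<equiv> centralizer_mod G N a"
  shows "derived (G\<lparr>carrier := H\<rparr>) (H \<inter> centralizer G N)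
    \<subseteq> core (G\<lparr>carrier := H\<rparr>) (centralizer G {a})"
proof -
  have H: "subgroup H G"
    unfolding H_def using N a by (rule subgroup_centralizer_mod)
  then interpret H: group "G\<lparr>carrier := H\<rparr>"
    by (rule subgroup_imp_group)
  have "H \<inter> centralizer G N \<lhd> G\<lparr>carrier := H\<rparr>"
    using normal_Int_subgroup[OF H normal_centralizer[OF N]] by (simp add: Int_commute)
  then have "derived (G\<lparr>carrier := H\<rparr>) (H \<inter> centralizer G N) \<lhd> G\<lparr>carrier := H\<rparr>"
    by (rule H.derived_is_normal)
  moreover have "derived (G\<lparr>carrier := H\<rparr>) (H \<inter> centralizer G N) \<subseteq> centralizer G {a}"
    using derived_consistent[OF _ H] derived_centralizer_mod_Int_centralizer_subset[OF assms(1-3)]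
    by (simp add: H_def)
  ultimately show ?thesis
    by (rule H.normal_subset_core)
qed

lemma derived_series_quotient_trivial_iff:
  assumes "K \<lhd> G"
  shows "(derived (G Mod K) ^^ n) (carrier (G Mod K)) = {\<one>\<^bsub>G Mod K\<^esub>}
    \<longleftrightarrow> (derived G ^^ n) (carrier G) \<subseteq> K"
proof -
  interpret K: normal K G by fact
  interpret quotient_map: group_hom G "G Mod K" "\<lambda>x. K #> x"
    using K.r_coset_hom_Mod K.factorgroup_is_group
    by (simp add: group_hom_def group_hom_axioms_def is_group)
  define D where "D = (derived G ^^ n) (carrier G)"
  have D: "subgroup D G"
    unfolding D_def by (rule exp_of_derived_is_subgroup[OF subgroup_self])
  have "(derived (G Mod K) ^^ n) (carrier (G Mod K)) = (\<lambda>x. K #> x) ` D"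
    unfolding D_def carrier_FactGroup by (rule quotient_map.exp_of_derived_img) simp
  moreover have "(\<lambda>x. K #> x) ` D = {K} \<longleftrightarrow> D \<subseteq> K"
  proof
    assume img: "(\<lambda>x. K #> x) ` D = {K}"
    show "D \<subseteq> K"
    proof
      fix x
      assume "x \<in> D"
      then have "K #> x = K" "x \<in> carrier G"
        using img subgroup.mem_carrier[OF D] by auto
      then show "x \<in> K"
        using coset_join1 K.subgroup_axioms by blast
    qed
  next
    assume "D \<subseteq> K"
    then have "K #> x = K" if "x \<in> D" for x
      using that K.rcos_const[OF is_group] by blast
    then show "(\<lambda>x. K #> x) ` D = {K}"
      using subgroup.one_closed[OF D] by force
  qed
  ultimately show ?thesis
    unfolding D_def by simp
qed

lemma derived_length_quotient_le:
  assumes "K \<lhd> G" "(derived G ^^ n) (carrier G) \<subseteq> K"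
  shows "derived_length (G Mod K) \<le> n"
  unfolding derived_length_def derived_series_quotient_trivial_iff[OF assms(1)]
  using assms(2) by (rule Least_le)

lemma derived_series_at_derived_length_quotient_subset:
  assumes "K \<lhd> G" "(derived G ^^ n) (carrier G) \<subseteq> K"
  shows "(derived G ^^ derived_length (G Mod K)) (carrier G) \<subseteq> K"
  unfolding derived_length_def derived_series_quotient_trivial_iff[OF assms(1)]
  using assms(2) by (rule LeastI)

lemma derived_length_quotient_le_Suc:
  assumes "solvable G" and M: "M \<lhd> G" and K: "K \<lhd> G" and "derived G M \<subseteq> K"
  shows "derived_length (G Mod K) \<le> derived_length (G Mod M) + 1"
proof (rule derived_length_quotient_le[OF K])
  obtain n where "(derived G ^^ n) (carrier G) = {\<one>}"
    using \<open>solvable G\<close> solvable_iff_trivial_derived_seq by blast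
  then have "(derived G ^^ n) (carrier G) \<subseteq> M"
    using subgroup.one_closed[OF normal_imp_subgroup[OF M]] by simp
  then have "(derived G ^^ derived_length (G Mod M)) (carrier G) \<subseteq> M"
    by (rule derived_series_at_derived_length_quotient_subset[OF M])
  then have "(derived G ^^ (derived_length (G Mod M) + 1)) (carrier G) \<subseteq> derived G M"
    by (simp add: mono_derived)
  with \<open>derived G M \<subseteq> K\<close> show "(derived G ^^ (derived_length (G Mod M) + 1)) (carrier G) \<subseteq> K"
    by blast
qed

lemma solvable_subgroup_carrier:
  assumes "solvable G" "subgroup H G"
  shows "solvable (G\<lparr>carrier := H\<rparr>)"
  using group_hom.inj_hom_imp_solvable[OF canonical_inj_is_hom[OF assms(2)]] assms(1)
  by simp

end

theorem lemma4p4: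
  fixes G :: "('a, 'b) monoid_scheme" and N :: "'a set" and a :: 'a
  assumes "group G" and "finite (carrier G)" and "solvable G"
    and "N \<lhd> G" and "comm_group (G\<lparr>carrier := N\<rparr>)"
    and "a \<in> carrier G"
  defines "C \<equiv> centralizer G {a}"
    and "CN \<equiv> {g \<in> carrier G. commutator G a g \<in> N}"
  shows "derived_length ((G\<lparr>carrier := CN\<rparr>) Mod (core (G\<lparr>carrier := CN\<rparr>) C))
           \<le> derived_length ((G\<lparr>carrier := CN\<rparr>) Mod (CN \<inter> centralizer G N)) + 1
    \<and> (cyclic_group (G\<lparr>carrier := N\<rparr>) \<longrightarrow>
         derived_length ((G\<lparr>carrier := CN\<rparr>) Mod (core (G\<lparr>carrier := CN\<rparr>) C)) \<le> 2)"
proof -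
  interpret G: group G by fact
  have CN_eq: "CN = centralizer_mod G N a"
    by (simp add: CN_def centralizer_mod_def)
  define L where "L = G\<lparr>carrier := CN\<rparr>"
  define M where "M = CN \<inter> centralizer G N"
  have CN: "subgroup CN G"
    using G.subgroup_centralizer_mod assms(4,6) by (simp add: CN_eq)
  then have L: "group L" and L_solvable: "solvable L"
    unfolding L_def using assms(3) by (auto intro: G.subgroup_imp_group G.solvable_subgroup_carrier)
  have M: "M \<lhd> L"
    using G.normal_Int_subgroup[OF CN G.normal_centralizer[OF assms(4)]]
    by (simp add: L_def M_def Int_commute)
  have "subgroup C L"
    using G.subgroup_incl[OF G.subgroup_centralizer CN] G.centralizer_subset_centralizer_mod
      normal_imp_subgroup[OF assms(4)] assms(6) by (simp add: L_def C_def CN_eq)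
  then have K: "core L C \<lhd> L"
    by (rule group.normal_core[OF L])
  have "derived L M \<subseteq> core L C"
    using G.derived_centralizer_mod_Int_centralizer_subset_core[OF assms(4-6)]
    by (simp add: L_def M_def C_def CN_eq)
  then have dl_bound: "derived_length (L Mod core L C) \<le> derived_length (L Mod M) + 1"
    by (rule group.derived_length_quotient_le_Suc[OF L L_solvable M K])
  moreover have "derived_length (L Mod core L C) \<le> 2" if "cyclic_group (G\<lparr>carrier := N\<rparr>)"
  proof -
    have "derived L (carrier L) \<subseteq> M"
      using G.derived_subgroup_subset_centralizer_cyclic_normal[OF assms(4) that CN]
      by (simp add: L_def M_def)
    then have "derived_length (L Mod M) \<le> 1"
      by (intro group.derived_length_quotient_le[OF L M]) simp
    with dl_bound show ?thesis
      by simp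
  qed
  ultimately show ?thesis
    unfolding L_def M_def by blast
qed

end
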